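(* Let $n\ge1$, $\varepsilon\in D$, $s\in D^n$, with the recursive construction below, and suppose $\Delta_n\neq0$. Then (i) $\big(\mu^{(n)}\big)^{*}=\Delta'_n\,\big(\mu^{(n-1)}\big)^{*}-\Delta_n\,x^{p(n-1)}\big(\mu^{((n-1)')}\big)^{*}$; (ii) $p(n)=p(n-1)+1$ if $e_{n-1}\le0$, and $p(n)=1$ if $e_{n-1}>0$.
   Context: Let $D$ be a commutative integral domain with $1\neq 0$. The reciprocal of $0$ is $0$, and for nonzero $f\in D[x]$ its reciprocal is $f^{*}(x)=x^{\deg f}f(x^{-1})$. For $s=(s_1,\dots,s_n)\in D^n$ put $\underline{s}=s_1x^{-1}+\cdots+s_nx^{-n}\in D[x,x^{-1}]$; for a Laurent polynomial $F$, $F_k$ is the coefficient of $x^k$; $s^{(i)}=(s_1,\dots,s_i)$. For nonzero $f\in D[x]$ and $t\in D^m$, $\Delta(f,t)=(f\cdot\underline{t})_{\deg f-m}$. Recursive construction (relative to a fixed $\varepsilon\in D$): put $\mu^{(-1)}=\varepsilon$, $\mu^{(0)}=1$, $\Delta_0=1$, $0'=-1$, and for $j\ge 0$ let $e_j=j+1-2\deg\mu^{(j)}$ (so $e_0=1$). For $j=1,\dots,n$ successively define: $\Delta_j=\Delta(\mu^{(j-1)},s^{(j)})$; the index $j'=(j-1)'$ if $\Delta_j=0$ or $e_{j-1}\le 0$, and $j'=j-1$ if $\Delta_j\neq0$ and $e_{j-1}>0$; $\Delta'_j=\Delta_{(j-1)'+1}$; and $\mu^{(j)}=\mu^{(j-1)}$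 if $\Delta_j=0$, otherwise $\mu^{(j)}=\Delta'_j\,x^{\max\{e_{j-1},0\}}\mu^{(j-1)}-\Delta_j\,x^{\max\{-e_{j-1},0\}}\mu^{((j-1)')}$. Define $p(0)=1$ and $p(j)=j-j'$ for $1\le j\le n$. *)

theory Defs
  imports "HOL-Computational_Algebra.Polynomial"
begin

text \<open>Delta(f,t) for t = (t 1, ..., t m): the coefficient of x^(deg f - m) in
  f * (t 1 x^-1 + ... + t m x^-m), written out as a finite sum.\<close>
definition DeltaF :: "'a::idom poly \<Rightarrow> nat \<Rightarrow> (nat \<Rightarrow> 'a) \<Rightarrow> 'a" where
  "DeltaF f m t = (\<Sum>k=1..m.
     (if int (degree f) - int m + int k \<ge> 0
      then coeff f (nat (int (degree f) - int m + int k)) else 0) * t k)"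

text \<open>History of the recursive construction: entry i of hist eps s j (i \<le> j) is
  (mu^(i), i', Delta_i).  mu^(-1) = eps, 0' = -1, Delta_0 = 1.\<close>
fun hist :: "'a::idom \<Rightarrow> (nat \<Rightarrow> 'a) \<Rightarrow> nat \<Rightarrow> ('a poly \<times> int \<times> 'a) list" where
  "hist eps s 0 = [(1, -1, 1)]"
| "hist eps s (Suc k) =
     (let H = hist eps s k;
          m = fst (H ! k);
          kp = fst (snd (H ! k));
          mp = (if kp < 0 then [:eps:] else fst (H ! nat kp));
          d = DeltaF m (Suc k) s;
          dp = snd (snd (H ! nat (kp + 1)));
          e = int k + 1 - 2 * int (degree m);
          jp = (if d = 0 \<or> e \<le> 0 then kp else int k);
          m' = (if d = 0 then m
                else smult dp (monom 1 (nat (max e 0)) * m)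
                   - smult d (monom 1 (nat (max (- e) 0)) * mp))
      in H @ [(m', jp, d)])"

definition mu :: "'a::idom \<Rightarrow> (nat \<Rightarrow> 'a) \<Rightarrow> nat \<Rightarrow> 'a poly" where
  "mu eps s j = fst (hist eps s j ! j)"

definition muI :: "'a::idom \<Rightarrow> (nat \<Rightarrow> 'a) \<Rightarrow> int \<Rightarrow> 'a poly" where
  "muI eps s i = (if i < 0 then [:eps:] else mu eps s (nat i))"

definition jprime :: "'a::idom \<Rightarrow> (nat \<Rightarrow> 'a) \<Rightarrow> nat \<Rightarrow> int" where
  "jprime eps s j = fst (snd (hist eps s j ! j))"

definition Delta :: "'a::idom \<Rightarrow> (nat \<Rightarrow> 'a) \<Rightarrow> nat \<Rightarrow> 'a" where
  "Delta eps s j = snd (snd (hist eps s j ! j))"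

definition Deltap :: "'a::idom \<Rightarrow> (nat \<Rightarrow> 'a) \<Rightarrow> nat \<Rightarrow> 'a" where
  "Deltap eps s j = Delta eps s (nat (jprime eps s (j - 1) + 1))"

definition e_idx :: "'a::idom \<Rightarrow> (nat \<Rightarrow> 'a) \<Rightarrow> nat \<Rightarrow> int" where
  "e_idx eps s j = int j + 1 - 2 * int (degree (mu eps s j))"

definition p_idx :: "'a::idom \<Rightarrow> (nat \<Rightarrow> 'a) \<Rightarrow> nat \<Rightarrow> nat" where
  "p_idx eps s j = (if j = 0 then 1 else nat (int j - jprime eps s j))"

end

theory Submission
  imports Defs
begin

text \<open>
  Whenever Delta_j is nonzero, the update writes mu^(j) as a difference A - B
  of a leading term A = Delta'_j x^max(e,0) mu^(j-1) and a correction term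
  B = Delta_j x^max(-e,0) mu^((j-1)'), where e = e_(j-1).  Reflecting a difference a - b
  with deg b < deg a gives a* - x^(deg a - deg b) b*, and reflection ignores factors x^m.
  So part (i) reduces to showing deg A - deg B = p(j-1).  This follows from the classical
  degree invariant
      mu^(k) is nonzero,  Delta_(k'+1) is nonzero,  deg mu^(k) + deg mu^(k') = k' + 1,
  proved by induction on k along the construction.  Part (ii) is immediate from the
  recurrence for the index j'.
\<close>

lemma hist_length: "length (hist eps s k) = Suc k"
  by (induction k) (simp_all add: Let_def)

text \<open>Later steps of the construction only append, so entry i is fixed once computed.\<close>
lemma hist_prefix: "i \<le> k \<Longrightarrow> hist eps s k ! i = hist eps s i ! i"
proof (induction k)
  case (Suc k)
  then show ?case
    by (cases "i = Suc k") (simp_all add: Let_def nth_append hist_length)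
qed simp

lemma jprime_bounds: "-1 \<le> jprime eps s k \<and> jprime eps s k < int k"
  by (induction k) (auto simp: jprime_def Let_def nth_append hist_length)

lemma jprime_Suc:
  "jprime eps s (Suc k) =
     (if Delta eps s (Suc k) = 0 \<or> e_idx eps s k \<le> 0 then jprime eps s k else int k)"
  by (simp add: Delta_def jprime_def mu_def e_idx_def Let_def nth_append hist_length)

definition lead_term :: "'a::idom \<Rightarrow> (nat \<Rightarrow> 'a) \<Rightarrow> nat \<Rightarrow> 'a poly" where
  "lead_term eps s k = smult (Delta eps s (nat (jprime eps s k + 1)))
     (monom 1 (nat (max (e_idx eps s k) 0)) * mu eps s k)"

definition corr_term :: "'a::idom \<Rightarrow> (nat \<Rightarrow> 'a) \<Rightarrow> nat \<Rightarrow> 'a poly" where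
  "corr_term eps s k = smult (Delta eps s (Suc k))
     (monom 1 (nat (max (- e_idx eps s k) 0)) * muI eps s (jprime eps s k))"

lemma mu_Suc:
  "mu eps s (Suc k) =
     (if Delta eps s (Suc k) = 0 then mu eps s k else lead_term eps s k - corr_term eps s k)"
proof -
  have b: "-1 \<le> jprime eps s k" "jprime eps s k < int k"
    using jprime_bounds by blast+
  have prev: "(if jprime eps s k < 0 then [:eps:] else fst (hist eps s k ! nat (jprime eps s k)))
        = muI eps s (jprime eps s k)"
    using b hist_prefix[of "nat (jprime eps s k)" k eps s] by (simp add: muI_def mu_def)
  have Delta': "snd (snd (hist eps s k ! nat (jprime eps s k + 1)))
        = Delta eps s (nat (jprime eps s k + 1))"
    using b hist_prefix[of "nat (jprime eps s k + 1)" k eps s] by (simp add: Delta_def)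
  show ?thesis
    unfolding lead_term_def corr_term_def
    using prev Delta' unfolding Delta_def jprime_def mu_def e_idx_def
    by (simp add: Let_def nth_append hist_length)
qed

text \<open>The convention p(0) = 1 agrees with p(j) = j - j' since 0' = -1.\<close>
lemma p_idx_eq: "p_idx eps s k = nat (int k - jprime eps s k)"
  by (cases k) (simp_all add: p_idx_def jprime_def)

lemma reflect_poly_monom_mult: "reflect_poly (monom (1::'a::idom) m * p) = reflect_poly p"
proof -
  have "reflect_poly (monom (1::'a) m) = 1"
    by (rule poly_eqI) (auto simp: coeff_reflect_poly coeff_monom degree_monom_eq)
  then show ?thesis by (simp add: reflect_poly_mult)
qed

lemma reflect_poly_diff:
  fixes a b :: "'a::idom poly"
  assumes "degree b < degree a"
  shows "reflect_poly (a - b) = reflect_poly a - monom 1 (degree a - degree b) * reflect_poly b"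
proof (rule poly_eqI)
  fix n
  have "degree (a - b) = degree a"
    using degree_add_eq_left[of "- b" a] assms by simp
  with assms show "coeff (reflect_poly (a - b)) n
      = coeff (reflect_poly a - monom 1 (degree a - degree b) * reflect_poly b) n"
    by (auto simp: coeff_monom_mult coeff_reflect_poly coeff_eq_0)
qed

definition degree_inv :: "'a::idom \<Rightarrow> (nat \<Rightarrow> 'a) \<Rightarrow> nat \<Rightarrow> bool" where
  "degree_inv eps s k \<longleftrightarrow> mu eps s k \<noteq> 0 \<and> Delta eps s (nat (jprime eps s k + 1)) \<noteq> 0
     \<and> int (degree (mu eps s k)) + int (degree (muI eps s (jprime eps s k))) = jprime eps s k + 1"

lemma degree_balance:
  fixes L L' k :: nat and J :: int
  assumes "int L + int L' = J + 1" and "J < int k"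
  shows "nat (max (int k + 1 - 2 * int L) 0) + L
       = nat (max (- (int k + 1 - 2 * int L)) 0) + L' + nat (int k - J)"
  using assms by (cases "int k + 1 - 2 * int L \<le> 0") auto

lemma degree_lead_term:
  assumes "degree_inv eps s k"
  shows "degree (lead_term eps s k) = nat (max (e_idx eps s k) 0) + degree (mu eps s k)"
  using assms by (simp add: degree_inv_def lead_term_def degree_mult_eq degree_monom_eq)

lemma degree_corr_term_le:
  "degree (corr_term eps s k)
     \<le> nat (max (- e_idx eps s k) 0) + degree (muI eps s (jprime eps s k))"
  unfolding corr_term_def
  by (rule order.trans[OF degree_smult_le], rule order.trans[OF degree_mult_le])
     (simp add: degree_monom_le)

lemma degree_corr_term:
  assumes "Delta eps s (Suc k) \<noteq> 0" and "muI eps s (jprime eps s k) \<noteq> 0"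
  shows "degree (corr_term eps s k)
     = nat (max (- e_idx eps s k) 0) + degree (muI eps s (jprime eps s k))"
  using assms by (simp add: corr_term_def degree_mult_eq degree_monom_eq)

lemma degree_lead_term_balance:
  assumes "degree_inv eps s k"
  shows "degree (lead_term eps s k)
     = nat (max (- e_idx eps s k) 0) + degree (muI eps s (jprime eps s k)) + p_idx eps s k"
  using degree_lead_term[OF assms] jprime_bounds[of eps s k] assms
    degree_balance[of "degree (mu eps s k)" "degree (muI eps s (jprime eps s k))"
      "jprime eps s k" k]
  by (simp add: degree_inv_def e_idx_def p_idx_eq)

lemma p_idx_pos: "0 < p_idx eps s k"
  using jprime_bounds[of eps s k] by (simp add: p_idx_eq)

lemma degree_corr_less:
  assumes "degree_inv eps s k"
  shows "degree (corr_term eps s k) < degree (lead_term eps s k)"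
  using degree_corr_term_le[of eps s k] degree_lead_term_balance[OF assms] p_idx_pos[of eps s k]
  by linarith

lemma degree_gap:
  assumes "degree_inv eps s k" "Delta eps s (Suc k) \<noteq> 0" "muI eps s (jprime eps s k) \<noteq> 0"
  shows "degree (lead_term eps s k) - degree (corr_term eps s k) = p_idx eps s k"
  using degree_corr_term[OF assms(2,3)] degree_lead_term_balance[OF assms(1)] by simp

text \<open>Inductive step: if e_k \<le> 0 the degree and j' are unchanged; otherwise j' becomes k
  and deg mu^(k+1) + deg mu^(k) = e_k + 2 deg mu^(k) = k + 1.\<close>
lemma degree_inv_Suc:
  assumes inv: "degree_inv eps s k"
  shows "degree_inv eps s (Suc k)"
proof (cases "Delta eps s (Suc k) = 0")
  case True
  then show ?thesis using inv by (simp add: degree_inv_def mu_Suc jprime_Suc)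
next
  case D: False
  have less: "degree (corr_term eps s k) < degree (lead_term eps s k)"
    using degree_corr_less[OF inv] .
  have deg: "degree (mu eps s (Suc k)) = degree (lead_term eps s k)"
    using D less degree_add_eq_left[of "- corr_term eps s k" "lead_term eps s k"]
    by (simp add: mu_Suc)
  have nz: "mu eps s (Suc k) \<noteq> 0" using deg less by auto
  show ?thesis
  proof (cases "e_idx eps s k \<le> 0")
    case True
    then show ?thesis
      using inv nz deg degree_lead_term[OF inv] by (simp add: degree_inv_def jprime_Suc)
  next
    case False
    have "nat (int k + 1) = Suc k" by simp
    then show ?thesis
      using inv nz deg degree_lead_term[OF inv] D False
      by (simp add: degree_inv_def jprime_Suc muI_def e_idx_def)
  qed
qed

lemma degree_inv: "degree_inv eps s k"
proof (induction k)
  case 0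
  have "hist eps s 0 ! 0 = (1, -1, 1)" by simp
  then show ?case by (simp add: degree_inv_def mu_def jprime_def Delta_def muI_def)
next
  case (Suc k)
  then show ?case by (rule degree_inv_Suc)
qed

lemma reflect_mu_Suc:
  assumes D: "Delta eps s (Suc k) \<noteq> 0"
  shows "reflect_poly (mu eps s (Suc k)) =
           smult (Delta eps s (nat (jprime eps s k + 1))) (reflect_poly (mu eps s k))
         - smult (Delta eps s (Suc k))
             (monom 1 (p_idx eps s k) * reflect_poly (muI eps s (jprime eps s k)))"
proof -
  have gap: "monom 1 (degree (lead_term eps s k) - degree (corr_term eps s k))
               * reflect_poly (corr_term eps s k)
           = smult (Delta eps s (Suc k))
               (monom 1 (p_idx eps s k) * reflect_poly (muI eps s (jprime eps s k)))"
    using degree_gap[OF degree_inv D]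
    by (cases "muI eps s (jprime eps s k) = 0")
       (simp_all add: corr_term_def reflect_poly_smult reflect_poly_monom_mult mult_smult_right)
  have lead: "reflect_poly (lead_term eps s k)
      = smult (Delta eps s (nat (jprime eps s k + 1))) (reflect_poly (mu eps s k))"
    by (simp add: lead_term_def reflect_poly_smult reflect_poly_monom_mult)
  have "mu eps s (Suc k) = lead_term eps s k - corr_term eps s k"
    using D by (simp add: mu_Suc)
  then show ?thesis
    using reflect_poly_diff[OF degree_corr_less[OF degree_inv[of eps s k]]]
    by (simp add: gap lead)
qed

lemma p_idx_Suc:
  assumes "Delta eps s (Suc k) \<noteq> 0"
  shows "p_idx eps s (Suc k) = (if e_idx eps s k \<le> 0 then p_idx eps s k + 1 else 1)"
proof -
  have "nat (int (Suc k) - jprime eps s k) = Suc (nat (int k - jprime eps s k))"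
    using jprime_bounds[of eps s k] by arith
  then show ?thesis using assms by (simp add: p_idx_eq jprime_Suc)
qed

theorem mainTheorem8:
  fixes eps :: "'a::idom" and s :: "nat \<Rightarrow> 'a" and n :: nat
  assumes "n \<ge> 1" and "Delta eps s n \<noteq> 0"
  shows "reflect_poly (mu eps s n) =
           smult (Deltap eps s n) (reflect_poly (mu eps s (n - 1)))
         - smult (Delta eps s n)
             (monom 1 (p_idx eps s (n - 1)) * reflect_poly (muI eps s (jprime eps s (n - 1))))
         \<and> p_idx eps s n = (if e_idx eps s (n - 1) \<le> 0 then p_idx eps s (n - 1) + 1 else 1)"
proof -
  obtain k where n: "n = Suc k" using assms(1) by (cases n) auto
  show ?thesis
    using reflect_mu_Suc[of eps s k] p_idx_Suc[of eps s k] assms(2)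
    by (simp add: n Deltap_def)
qed

end
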